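(* Let $\overline{\mathcal R}(D_x,D_z)$ be defined exactly as $\mathcal R(D_x,D_z)$ except that the joint distribution is allowed to be of the form $p(x,y,z,u,v,w)=p(x,y)p(z|x)p(u|y)p(v|u,z)p(w|u,v,x,y)$. Then $\overline{\mathcal R}(D_x,D_z)=\mathcal R(D_x,D_z)$.
   Context: Let $\mathcal X,\mathcal Y,\mathcal Z,\hat{\mathcal X},\hat{\mathcal Z}$ be finite alphabets, $(X,Y,Z)\sim p(x,y)p(z|x)$, and $d_x:\mathcal X\times\hat{\mathcal X}\to[0,\infty)$, $d_z:\mathcal Z\times\hat{\mathcal Z}\to[0,\infty)$. $\mathcal R(D_x,D_z)$ is the set of all rate triples $(R_1,R_2,R_3)$ with $R_1\ge I(Y;U|Z)$, $R_2\ge I(Z;V|U,X)$, $R_3\ge I(X;W|U,V,Z)$ for some finite-alphabet random variables $U,V,W$ with joint distribution $p(x,y,z,u,v,w)=p(x,y)p(z|x)p(u|y)p(v|u,z)p(w|u,v,x)$ and deterministic functions $\hat X(U,W,Z)$, $\hat Z(U,V,X)$ with $\mathbb E\, d_x(X,\hat X(U,W,Z))\le D_x$ and $\mathbb E\, d_z(Z,\hat Z(U,V,X))\le D_z$. *)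

theory Defs
  imports Complex_Main
begin

text \<open>The auxiliary alphabets of U, V, W (finite, but otherwise arbitrary) are
  represented as initial segments {..<n} of the naturals.\<close>

definition pmf_on :: "('a::finite \<Rightarrow> real) \<Rightarrow> bool" where
  "pmf_on p \<longleftrightarrow> (\<forall>a. 0 \<le> p a) \<and> (\<Sum>a\<in>UNIV. p a) = 1"

definition channel :: "('a \<Rightarrow> 'b::finite \<Rightarrow> real) \<Rightarrow> bool" where
  "channel K \<longleftrightarrow> (\<forall>a. pmf_on (K a))"

definition nat_channel :: "nat \<Rightarrow> ('a \<Rightarrow> nat \<Rightarrow> real) \<Rightarrow> bool" where
  "nat_channel n K \<longleftrightarrow>
     (\<forall>a b. 0 \<le> K a b) \<and> (\<forall>a b. n \<le> b \<longrightarrow> K a b = 0) \<and> (\<forall>a. (\<Sum>b<n. K a b) = 1)"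

definition marg :: "('w \<Rightarrow> real) \<Rightarrow> 'w set \<Rightarrow> ('w \<Rightarrow> 'c) \<Rightarrow> 'c \<Rightarrow> real" where
  "marg P S f c = (\<Sum>t\<in>{t\<in>S. f t = c}. P t)"

text \<open>Conditional mutual information I(A;B|C) (in bits), written as the expectation
  of log (p(a,b,c) p(c) / (p(a,c) p(b,c))).  Terms with P t = 0 contribute 0.\<close>
definition cmi :: "('w \<Rightarrow> real) \<Rightarrow> 'w set \<Rightarrow> ('w \<Rightarrow> 'a) \<Rightarrow> ('w \<Rightarrow> 'b) \<Rightarrow> ('w \<Rightarrow> 'c) \<Rightarrow> real" where
  "cmi P S A B C = (\<Sum>t\<in>S. P t *
     log 2 ((marg P S (\<lambda>t. (A t, B t, C t)) (A t, B t, C t) * marg P S C (C t)) /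
            (marg P S (\<lambda>t. (A t, C t)) (A t, C t) * marg P S (\<lambda>t. (B t, C t)) (B t, C t))))"

definition joint ::
  "('x \<Rightarrow> 'y \<Rightarrow> real) \<Rightarrow> ('x \<Rightarrow> 'z \<Rightarrow> real) \<Rightarrow> ('y \<Rightarrow> nat \<Rightarrow> real) \<Rightarrow>
   (nat \<Rightarrow> 'z \<Rightarrow> nat \<Rightarrow> real) \<Rightarrow> (nat \<Rightarrow> nat \<Rightarrow> 'x \<Rightarrow> 'y \<Rightarrow> nat \<Rightarrow> real) \<Rightarrow>
   ('x \<times> 'y \<times> 'z \<times> nat \<times> nat \<times> nat) \<Rightarrow> real" where
  "joint pxy pzx pu pv pw = (\<lambda>(x,y,z,u,v,w).
      pxy x y * pzx x z * pu y u * pv u z v * pw u v x y w)"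

definition outcomes :: "nat \<Rightarrow> nat \<Rightarrow> nat \<Rightarrow> ('x \<times> 'y \<times> 'z \<times> nat \<times> nat \<times> nat) set" where
  "outcomes nu nv nw = UNIV \<times> UNIV \<times> UNIV \<times> {..<nu} \<times> {..<nv} \<times> {..<nw}"

definition achieves ::
  "('x::finite \<Rightarrow> 'y::finite \<Rightarrow> real) \<Rightarrow> ('x \<Rightarrow> 'z::finite \<Rightarrow> real) \<Rightarrow>
   ('x \<Rightarrow> 'xh::finite \<Rightarrow> real) \<Rightarrow> ('z \<Rightarrow> 'zh::finite \<Rightarrow> real) \<Rightarrow> real \<Rightarrow> real \<Rightarrow>
   nat \<Rightarrow> nat \<Rightarrow> nat \<Rightarrow> ('y \<Rightarrow> nat \<Rightarrow> real) \<Rightarrow> (nat \<Rightarrow> 'z \<Rightarrow> nat \<Rightarrow> real) \<Rightarrow>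
   (nat \<Rightarrow> nat \<Rightarrow> 'x \<Rightarrow> 'y \<Rightarrow> nat \<Rightarrow> real) \<Rightarrow>
   (nat \<Rightarrow> nat \<Rightarrow> 'z \<Rightarrow> 'xh) \<Rightarrow> (nat \<Rightarrow> nat \<Rightarrow> 'x \<Rightarrow> 'zh) \<Rightarrow>
   real \<times> real \<times> real \<Rightarrow> bool" where
  "achieves pxy pzx dx dz Dx Dz nu nv nw pu pv pw xh zh r \<longleftrightarrow>
    (let P = joint pxy pzx pu pv pw;
         S = (outcomes nu nv nw :: ('x \<times> 'y \<times> 'z \<times> nat \<times> nat \<times> nat) set)
     in nat_channel nu pu \<and>
        nat_channel nv (\<lambda>(u,z). pv u z) \<and>
        nat_channel nw (\<lambda>(u,v,x,y). pw u v x y) \<and>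
        (\<Sum>(x,y,z,u,v,w)\<in>S. P (x,y,z,u,v,w) * dx x (xh u w z)) \<le> Dx \<and>
        (\<Sum>(x,y,z,u,v,w)\<in>S. P (x,y,z,u,v,w) * dz z (zh u v x)) \<le> Dz \<and>
        fst r \<ge> cmi P S (\<lambda>(x,y,z,u,v,w). y) (\<lambda>(x,y,z,u,v,w). u) (\<lambda>(x,y,z,u,v,w). z) \<and>
        fst (snd r) \<ge> cmi P S (\<lambda>(x,y,z,u,v,w). z) (\<lambda>(x,y,z,u,v,w). v) (\<lambda>(x,y,z,u,v,w). (u,x)) \<and>
        snd (snd r) \<ge> cmi P S (\<lambda>(x,y,z,u,v,w). x) (\<lambda>(x,y,z,u,v,w). w) (\<lambda>(x,y,z,u,v,w). (u,v,z)))"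

definition rate_region ::
  "('x::finite \<Rightarrow> 'y::finite \<Rightarrow> real) \<Rightarrow> ('x \<Rightarrow> 'z::finite \<Rightarrow> real) \<Rightarrow>
   ('x \<Rightarrow> 'xh::finite \<Rightarrow> real) \<Rightarrow> ('z \<Rightarrow> 'zh::finite \<Rightarrow> real) \<Rightarrow> real \<Rightarrow> real \<Rightarrow>
   (real \<times> real \<times> real) set" where
  "rate_region pxy pzx dx dz Dx Dz = {r. \<exists>nu nv nw pu pv
      (pw :: nat \<Rightarrow> nat \<Rightarrow> 'x \<Rightarrow> nat \<Rightarrow> real) xh zh.
      achieves pxy pzx dx dz Dx Dz nu nv nw pu pv (\<lambda>u v x y w. pw u v x w) xh zh r}"

definition rate_region_bar ::
  "('x::finite \<Rightarrow> 'y::finite \<Rightarrow> real) \<Rightarrow> ('x \<Rightarrow> 'z::finite \<Rightarrow> real) \<Rightarrow>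
   ('x \<Rightarrow> 'xh::finite \<Rightarrow> real) \<Rightarrow> ('z \<Rightarrow> 'zh::finite \<Rightarrow> real) \<Rightarrow> real \<Rightarrow> real \<Rightarrow>
   (real \<times> real \<times> real) set" where
  "rate_region_bar pxy pzx dx dz Dx Dz = {r. \<exists>nu nv nw pu pv pw xh zh.
      achieves pxy pzx dx dz Dx Dz nu nv nw pu pv pw xh zh r}"

end

theory Submission
  imports Defs
begin

text \<open>Every distortion and mutual-information term in the definition of the rate region
  depends on the joint law only through the marginals of (X,Y,Z,U,V) and of (X,Z,U,V,W).
  The first does not involve the test channel of W at all.  The second is preserved if
  p(w|u,v,x,y) is replaced by its average over Y given (U,X), namely
  p(w|u,v,x) = sum_y p(x,y) p(u|y) p(w|u,v,x,y) / sum_y p(x,y) p(u|y),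
  because Z and V are conditionally independent of Y given (U,X).  Hence every point of
  the larger region is achieved by a test channel of the smaller form.\<close>

lemma marg_eq_sum_indicator:
  "finite S \<Longrightarrow> marg P S f c = (\<Sum>t\<in>S. P t * (if f t = c then 1 else 0))"
  unfolding marg_def by (simp add: sum.inter_filter if_distrib cong: if_cong)

lemma sum_mult_eq_sum_marg:
  assumes "finite S"
  shows "(\<Sum>t\<in>S. P t * \<phi> (f t)) = (\<Sum>c\<in>f ` S. marg P S f c * \<phi> c)"
proof -
  have "(\<Sum>t\<in>S. P t * \<phi> (f t)) = (\<Sum>c\<in>f ` S. \<Sum>t\<in>{t\<in>S. f t = c}. P t * \<phi> (f t))"
    using sum.image_gen[OF assms] .
  also have "\<dots> = (\<Sum>c\<in>f ` S. marg P S f c * \<phi> c)"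
    unfolding marg_def by (rule sum.cong) (auto simp: sum_distrib_right)
  finally show ?thesis .
qed

lemma sum_mult_cong_marg:
  "finite S \<Longrightarrow> marg P S f = marg P' S f \<Longrightarrow>
   (\<Sum>t\<in>S. P t * \<phi> (f t)) = (\<Sum>t\<in>S. P' t * \<phi> (f t))"
  by (simp add: sum_mult_eq_sum_marg)

lemma marg_comp_cong:
  assumes "finite S" and "marg P S f = marg P' S f"
  shows "marg P S (h \<circ> f) = marg P' S (h \<circ> f)"
proof
  fix c
  have "marg Q S (h \<circ> f) c = (\<Sum>t\<in>S. Q t * (if h (f t) = c then 1 else 0))" for Q
    using marg_eq_sum_indicator[OF assms(1), of Q "h \<circ> f" c] by simp
  then show "marg P S (h \<circ> f) c = marg P' S (h \<circ> f) c"
    using sum_mult_cong_marg[OF assms, of "\<lambda>b. if h b = c then 1 else 0"] by simp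
qed

lemma cmi_cong_marg:
  assumes fin: "finite S"
    and eq: "marg P S (\<lambda>t. (A t, B t, C t)) = marg P' S (\<lambda>t. (A t, B t, C t))"
  shows "cmi P S A B C = cmi P' S A B C"
proof -
  define f where "f = (\<lambda>t. (A t, B t, C t))"
  have eqf: "marg P S f = marg P' S f" using eq by (simp add: f_def)
  from marg_comp_cong[OF fin eqf, of "\<lambda>(a,b,c). c"] marg_comp_cong[OF fin eqf, of "\<lambda>(a,b,c). (a,c)"]
    marg_comp_cong[OF fin eqf, of "\<lambda>(a,b,c). (b,c)"]
  have C: "marg P S C = marg P' S C"
    and AC: "marg P S (\<lambda>t. (A t, C t)) = marg P' S (\<lambda>t. (A t, C t))"
    and BC: "marg P S (\<lambda>t. (B t, C t)) = marg P' S (\<lambda>t. (B t, C t))"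
    by (simp_all add: f_def comp_def)
  define \<phi> where "\<phi> = (\<lambda>(a,b,c). log 2 ((marg P' S f (a,b,c) * marg P' S C c) /
      (marg P' S (\<lambda>t. (A t, C t)) (a,c) * marg P' S (\<lambda>t. (B t, C t)) (b,c))))"
  have "cmi P S A B C = (\<Sum>t\<in>S. P t * \<phi> (f t))"
    unfolding cmi_def C AC BC eq by (simp add: \<phi>_def f_def)
  also have "\<dots> = (\<Sum>t\<in>S. P' t * \<phi> (f t))" by (rule sum_mult_cong_marg[OF fin eqf])
  also have "\<dots> = cmi P' S A B C" unfolding cmi_def by (simp add: \<phi>_def f_def)
  finally show ?thesis .
qed

lemma cmi_cong_marg_comp:
  assumes "finite S" and "marg P S f = marg P' S f" and "(\<lambda>t. (A t, B t, C t)) = h \<circ> f"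
  shows "cmi P S A B C = cmi P' S A B C"
proof (rule cmi_cong_marg[OF assms(1)])
  show "marg P S (\<lambda>t. (A t, B t, C t)) = marg P' S (\<lambda>t. (A t, B t, C t))"
    unfolding assms(3) by (rule marg_comp_cong[OF assms(1,2)])
qed

lemma finite_outcomes:
  "finite (outcomes nu nv nw :: ('x::finite \<times> 'y::finite \<times> 'z::finite \<times> nat \<times> nat \<times> nat) set)"
  unfolding outcomes_def by simp

lemma marg_joint_xyzuv:
  fixes pxy :: "'x::finite \<Rightarrow> 'y::finite \<Rightarrow> real" and pzx :: "'x \<Rightarrow> 'z::finite \<Rightarrow> real"
  assumes "nat_channel nw (\<lambda>(u,v,x,y). pw u v x y)"
  shows "marg (joint pxy pzx pu pv pw) (outcomes nu nv nw) (\<lambda>(x,y,z,u,v,w). (x,y,z,u,v)) (x,y,z,u,v)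
     = (if u < nu \<and> v < nv then pxy x y * pzx x z * pu y u * pv u z v else 0)"
proof -
  have fibre: "{t \<in> (outcomes nu nv nw :: ('x \<times> 'y \<times> 'z \<times> nat \<times> nat \<times> nat) set).
       (\<lambda>(x,y,z,u,v,w). (x,y,z,u,v)) t = (x,y,z,u,v)}
     = (if u < nu \<and> v < nv then (\<lambda>w. (x,y,z,u,v,w)) ` {..<nw} else {})"
    by (auto simp: outcomes_def)
  have "(\<Sum>w<nw. pw u v x y w) = 1" using assms unfolding nat_channel_def by auto
  then show ?thesis
    unfolding marg_def fibre
    by (simp add: sum.reindex inj_on_def joint_def sum_distrib_left[symmetric])
qed

lemma marg_joint_xzuvw:
  fixes pxy :: "'x::finite \<Rightarrow> 'y::finite \<Rightarrow> real" and pzx :: "'x \<Rightarrow> 'z::finite \<Rightarrow> real"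
  shows "marg (joint pxy pzx pu pv pw) (outcomes nu nv nw) (\<lambda>(x,y,z,u,v,w). (x,z,u,v,w)) (x,z,u,v,w)
     = (if u < nu \<and> v < nv \<and> w < nw
        then (\<Sum>y\<in>UNIV. pxy x y * pzx x z * pu y u * pv u z v * pw u v x y w) else 0)"
proof -
  have fibre: "{t \<in> (outcomes nu nv nw :: ('x \<times> 'y \<times> 'z \<times> nat \<times> nat \<times> nat) set).
       (\<lambda>(x,y,z,u,v,w). (x,z,u,v,w)) t = (x,z,u,v,w)}
     = (if u < nu \<and> v < nv \<and> w < nw then (\<lambda>y. (x,y,z,u,v,w)) ` UNIV else {})"
    by (auto simp: outcomes_def)
  show ?thesis
    unfolding marg_def fibre by (simp add: sum.reindex inj_on_def joint_def)
qed

lemma achieves_cong_marg_xzuvw: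
  fixes pxy :: "'x::finite \<Rightarrow> 'y::finite \<Rightarrow> real" and pzx :: "'x \<Rightarrow> 'z::finite \<Rightarrow> real"
  assumes ach: "achieves pxy pzx dx dz Dx Dz nu nv nw pu pv pw xh zh r"
    and ch': "nat_channel nw (\<lambda>(u,v,x,y). pw' u v x y)"
    and eq_xzuvw: "marg (joint pxy pzx pu pv pw) (outcomes nu nv nw) (\<lambda>(x,y,z,u,v,w). (x,z,u,v,w))
                 = marg (joint pxy pzx pu pv pw') (outcomes nu nv nw) (\<lambda>(x,y,z,u,v,w). (x,z,u,v,w))"
  shows "achieves pxy pzx dx dz Dx Dz nu nv nw pu pv pw' xh zh r"
proof -
  define S where "S = (outcomes nu nv nw :: ('x \<times> 'y \<times> 'z \<times> nat \<times> nat \<times> nat) set)"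
  define P where "P = joint pxy pzx pu pv pw"
  define P' where "P' = joint pxy pzx pu pv pw'"
  define f5 where "f5 = (\<lambda>(x::'x,y::'y,z::'z,u::nat,v::nat,w::nat). (x,z,u,v,w))"
  define f6 where "f6 = (\<lambda>(x::'x,y::'y,z::'z,u::nat,v::nat,w::nat). (x,y,z,u,v))"
  have fin: "finite S" unfolding S_def by (rule finite_outcomes)
  have ch: "nat_channel nw (\<lambda>(u,v,x,y). pw u v x y)"
    using ach unfolding achieves_def Let_def by auto
  have eq5: "marg P S f5 = marg P' S f5" using eq_xzuvw by (simp add: P_def P'_def S_def f5_def)
  have eq6: "marg P S f6 = marg P' S f6"
    by (rule ext) (auto simp: P_def P'_def S_def f6_def marg_joint_xyzuv[OF ch] marg_joint_xyzuv[OF ch'])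
  have dist: "(\<Sum>t\<in>S. P t * \<phi> (f5 t)) = (\<Sum>t\<in>S. P' t * \<phi> (f5 t))" for \<phi> :: "_ \<Rightarrow> real"
    by (rule sum_mult_cong_marg[OF fin eq5])
  from dist[of "\<lambda>(x,z,u,v,w). dx x (xh u w z)"] dist[of "\<lambda>(x,z,u,v,w). dz z (zh u v x)"]
  have dx_eq: "(\<Sum>(x,y,z,u,v,w)\<in>S. P (x,y,z,u,v,w) * dx x (xh u w z))
             = (\<Sum>(x,y,z,u,v,w)\<in>S. P' (x,y,z,u,v,w) * dx x (xh u w z))"
    and dz_eq: "(\<Sum>(x,y,z,u,v,w)\<in>S. P (x,y,z,u,v,w) * dz z (zh u v x))
             = (\<Sum>(x,y,z,u,v,w)\<in>S. P' (x,y,z,u,v,w) * dz z (zh u v x))"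
    by (simp_all add: f5_def case_prod_unfold)
  have R1: "cmi P S (\<lambda>(x,y,z,u,v,w). y) (\<lambda>(x,y,z,u,v,w). u) (\<lambda>(x,y,z,u,v,w). z)
          = cmi P' S (\<lambda>(x,y,z,u,v,w). y) (\<lambda>(x,y,z,u,v,w). u) (\<lambda>(x,y,z,u,v,w). z)"
    by (rule cmi_cong_marg_comp[OF fin eq6, where h = "\<lambda>(x,y,z,u,v). (y,u,z)"])
       (auto simp: fun_eq_iff f6_def)
  have R2: "cmi P S (\<lambda>(x,y,z,u,v,w). z) (\<lambda>(x,y,z,u,v,w). v) (\<lambda>(x,y,z,u,v,w). (u,x))
          = cmi P' S (\<lambda>(x,y,z,u,v,w). z) (\<lambda>(x,y,z,u,v,w). v) (\<lambda>(x,y,z,u,v,w). (u,x))"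
    by (rule cmi_cong_marg_comp[OF fin eq6, where h = "\<lambda>(x,y,z,u,v). (z,v,u,x)"])
       (auto simp: fun_eq_iff f6_def)
  have R3: "cmi P S (\<lambda>(x,y,z,u,v,w). x) (\<lambda>(x,y,z,u,v,w). w) (\<lambda>(x,y,z,u,v,w). (u,v,z))
          = cmi P' S (\<lambda>(x,y,z,u,v,w). x) (\<lambda>(x,y,z,u,v,w). w) (\<lambda>(x,y,z,u,v,w). (u,v,z))"
    by (rule cmi_cong_marg_comp[OF fin eq5, where h = "\<lambda>(x,z,u,v,w). (x,w,u,v,z)"])
       (auto simp: fun_eq_iff f5_def)
  show ?thesis
    using ach ch' dx_eq dz_eq R1 R2 R3
    unfolding achieves_def Let_def P_def[symmetric] P'_def[symmetric] S_def[symmetric] by simp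
qed

text \<open>Where (U,X) = (u,x) has probability zero any distribution will do; the point mass
  at 0 is chosen.\<close>

definition averaged_channel ::
  "('x \<Rightarrow> 'y::finite \<Rightarrow> real) \<Rightarrow> ('y \<Rightarrow> nat \<Rightarrow> real) \<Rightarrow>
   (nat \<Rightarrow> nat \<Rightarrow> 'x \<Rightarrow> 'y \<Rightarrow> nat \<Rightarrow> real) \<Rightarrow> nat \<Rightarrow> nat \<Rightarrow> 'x \<Rightarrow> nat \<Rightarrow> real" where
  "averaged_channel pxy pu pw u v x w =
     (let d = (\<Sum>y\<in>UNIV. pxy x y * pu y u)
      in if d = 0 then (if w = 0 then 1 else 0)
         else (\<Sum>y\<in>UNIV. pxy x y * pu y u * pw u v x y w) / d)"

lemma averaged_channel_mult:
  assumes "\<And>y. 0 \<le> pxy x y * pu y u"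
  shows "(\<Sum>y\<in>UNIV. pxy x y * pu y u) * averaged_channel pxy pu pw u v x w
       = (\<Sum>y\<in>UNIV. pxy x y * pu y u * pw u v x y w)"
proof (cases "(\<Sum>y\<in>UNIV. pxy x y * pu y u) = 0")
  case True
  then have vanish: "pxy x y * pu y u = 0" for y using assms by (simp add: sum_nonneg_eq_0_iff)
  show ?thesis by (simp only: True vanish mult_zero_left sum.neutral_const)
qed (simp add: averaged_channel_def)

lemma nat_channel_averaged_channel:
  assumes nonneg: "\<And>x y u. 0 \<le> pxy x y * pu y u"
    and ch: "nat_channel nw (\<lambda>(u,v,x,y). pw u v x y)"
  shows "nat_channel nw (\<lambda>(u,v,x,y). averaged_channel pxy pu pw u v x)"
proof -
  have pw_nonneg: "0 \<le> pw u v x y w" and pw_zero: "nw \<le> w \<Longrightarrow> pw u v x y w = 0"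
    and pw_sum: "(\<Sum>w<nw. pw u v x y w) = 1" for u v x y w
    using ch unfolding nat_channel_def by auto
  have "0 < nw" using pw_sum by (cases nw) auto
  have nonneg': "0 \<le> averaged_channel pxy pu pw u v x w" for u v x w
    unfolding averaged_channel_def Let_def
    by (auto intro!: divide_nonneg_nonneg sum_nonneg mult_nonneg_nonneg nonneg pw_nonneg)
  have zero': "averaged_channel pxy pu pw u v x w = 0" if "nw \<le> w" for u v x w
    using that \<open>0 < nw\<close> by (simp add: averaged_channel_def Let_def pw_zero)
  have sum': "(\<Sum>w<nw. averaged_channel pxy pu pw u v x w) = 1" for u v x
  proof (cases "(\<Sum>y\<in>UNIV. pxy x y * pu y u) = 0")
    case True
    then show ?thesis using \<open>0 < nw\<close> by (simp add: averaged_channel_def)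
  next
    case False
    have "(\<Sum>w<nw. \<Sum>y\<in>UNIV. pxy x y * pu y u * pw u v x y w) = (\<Sum>y\<in>UNIV. pxy x y * pu y u)"
      by (subst sum.swap) (simp add: sum_distrib_left[symmetric] pw_sum)
    with False show ?thesis
      by (simp add: averaged_channel_def sum_divide_distrib[symmetric])
  qed
  show ?thesis
    unfolding nat_channel_def using nonneg' zero' sum' by auto
qed

lemma marg_joint_xzuvw_averaged_channel:
  fixes pxy :: "'x::finite \<Rightarrow> 'y::finite \<Rightarrow> real" and pzx :: "'x \<Rightarrow> 'z::finite \<Rightarrow> real"
    and pw :: "nat \<Rightarrow> nat \<Rightarrow> 'x \<Rightarrow> 'y \<Rightarrow> nat \<Rightarrow> real"
  assumes "\<And>x y u. 0 \<le> pxy x y * pu y u"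
  defines "pw' \<equiv> \<lambda>u v x y. averaged_channel pxy pu pw u v x"
  shows "marg (joint pxy pzx pu pv pw) (outcomes nu nv nw) (\<lambda>(x,y,z,u,v,w). (x,z,u,v,w))
       = marg (joint pxy pzx pu pv pw') (outcomes nu nv nw) (\<lambda>(x,y,z,u,v,w). (x,z,u,v,w))"
proof (rule ext, clarify)
  fix x z u v w
  have "(\<Sum>y\<in>UNIV. pxy x y * pzx x z * pu y u * pv u z v * pw u v x y w)
      = pzx x z * pv u z v * (\<Sum>y\<in>UNIV. pxy x y * pu y u * pw u v x y w)"
    by (simp add: sum_distrib_left algebra_simps)
  also have "\<dots> = pzx x z * pv u z v * ((\<Sum>y\<in>UNIV. pxy x y * pu y u) * pw' u v x undefined w)"
    using averaged_channel_mult[where pxy = pxy and pu = pu, OF assms(1)] by (simp add: pw'_def)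
  also have "\<dots> = (\<Sum>y\<in>UNIV. pxy x y * pzx x z * pu y u * pv u z v * pw' u v x y w)"
    by (simp add: pw'_def sum_distrib_left sum_distrib_right algebra_simps)
  finally show "marg (joint pxy pzx pu pv pw) (outcomes nu nv nw) (\<lambda>(x,y,z,u,v,w). (x,z,u,v,w)) (x,z,u,v,w)
      = marg (joint pxy pzx pu pv pw') (outcomes nu nv nw) (\<lambda>(x,y,z,u,v,w). (x,z,u,v,w)) (x,z,u,v,w)"
    unfolding marg_joint_xzuvw by simp
qed

theorem lemma5:
  fixes pxy :: "'x::finite \<Rightarrow> 'y::finite \<Rightarrow> real"
    and pzx :: "'x \<Rightarrow> 'z::finite \<Rightarrow> real"
    and dx :: "'x \<Rightarrow> 'xh::finite \<Rightarrow> real"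
    and dz :: "'z \<Rightarrow> 'zh::finite \<Rightarrow> real"
    and Dx Dz :: real
  assumes "pmf_on (\<lambda>(x,y). pxy x y)"
    and "channel pzx"
    and "\<forall>x xh. 0 \<le> dx x xh"
    and "\<forall>z zh. 0 \<le> dz z zh"
  shows "rate_region_bar pxy pzx dx dz Dx Dz = rate_region pxy pzx dx dz Dx Dz"
proof
  show "rate_region pxy pzx dx dz Dx Dz \<subseteq> rate_region_bar pxy pzx dx dz Dx Dz"
    unfolding rate_region_def rate_region_bar_def by blast
  show "rate_region_bar pxy pzx dx dz Dx Dz \<subseteq> rate_region pxy pzx dx dz Dx Dz"
  proof
    fix r assume "r \<in> rate_region_bar pxy pzx dx dz Dx Dz"
    then obtain nu nv nw pu pv pw xh zh
      where ach: "achieves pxy pzx dx dz Dx Dz nu nv nw pu pv pw xh zh r"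
      unfolding rate_region_bar_def by blast
    have "nat_channel nu pu" and ch: "nat_channel nw (\<lambda>(u,v,x,y). pw u v x y)"
      using ach unfolding achieves_def Let_def by auto
    moreover have "0 \<le> pxy x y" for x y
      using assms(1) unfolding pmf_on_def by (metis case_prod_conv)
    ultimately have nonneg: "0 \<le> pxy x y * pu y u" for x y u
      by (simp add: nat_channel_def)
    have "achieves pxy pzx dx dz Dx Dz nu nv nw pu pv
            (\<lambda>u v x y. averaged_channel pxy pu pw u v x) xh zh r"
      using achieves_cong_marg_xzuvw[OF ach nat_channel_averaged_channel[where pxy = pxy and pu = pu, OF nonneg ch]]
        marg_joint_xzuvw_averaged_channel[where pxy = pxy and pu = pu, OF nonneg] by blast
    then show "r \<in> rate_region pxy pzx dx dz Dx Dz"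
      unfolding rate_region_def by blast
  qed
qed

end
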